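(* Assume that for each $l\in PC$ the map $h_l(\rho)=\sigma_l\rho\sigma_l^*/\operatorname{tr}(\sigma_l\rho\sigma_l^* )$ is a polynomial of degree at most one. Then the infinitesimal generator $\mathcal{A}$ maps polynomials to polynomials: if $w(t,\rho)$ is a polynomial (in $t$ and the real and imaginary parts of the entries of $\rho$), then $\mathcal{A}w(t,\rho,u)$ is a polynomial in $(t,\rho,u)$.
   Context: Fix integers $n\ge 1$, $K\ge 1$, $L\ge 0$. Let $H_0,\dots,H_K\in\mathbb{C}^{n\times n}$ be Hermitian and for $u\in\mathbb{R}^K$ set $H(u)=H_0+\sum_{k=1}^K u_kH_k$. Let $\sigma_1,\dots,\sigma_L\in\mathbb{C}^{n\times n}$ and partition $\{1,\dots,L\}=HD\sqcup PC$. $A^*$ is the conjugate transpose, $[A,C]=AC-CA$, $\{A,C\}=AC+CA$. Define $\mathcal{L}(u)\rho=-i[H(u),\rho]+\sum_{l=1}^L\big(\sigma_l\rho\sigma_l^*-\tfrac12\{\sigma_l^*\sigma_l,\rho\}\big)$; for $l\in HD$: $\mathcal{G}_l\rho=\sigma_l\rho+\rho\sigma_l^*-\operatorname{tr}(\sigma_l\rho+\rho\sigma_l^* )\rho$; for $l\in PC$: $\lambda_l(\rho)=\operatorname{tr}(\sigma_l\rho\sigma_l^* )$, $h_l(\rho)=\sigma_l\rho\sigma_l^*/\lambda_l(\rho)$, $\mathcal{L}_l\rho=\sigma_l\rho\sigma_l^*-\lambda_l(\rho)\rho$; and $\tilde{\mathcal{L}}(u)=\mathcal{L}(u)-\sum_{l\in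 PC}\mathcal{L}_l$. The infinitesimal generator of the quantum filtering equation $d\rho_t=\mathcal{L}(u_t)\rho_t\,dt+\sum_{l\in HD}\mathcal{G}_l\rho_t\,dw^l_t+\sum_{l\in PC}[(h_l(\rho_t)-\rho_t)dn^l_t-\mathcal{L}_l\rho_t\,dt]$ acts on smooth $w(t,\rho)$ by $\mathcal{A}w(t,\rho,u)=\frac{\partial w}{\partial t}(t,\rho)+\langle\tilde{\mathcal{L}}(u)\rho,\nabla_\rho w(t,\rho)\rangle+\frac12\sum_{l\in HD}\langle\mathcal{G}_l\rho,\nabla^2_\rho w(t,\rho)\,\mathcal{G}_l\rho\rangle+\sum_{l\in PC}\lambda_l(\rho)\big(w(t,h_l(\rho))-w(t,\rho)\big)$, where $\langle\cdot,\cdot\rangle$ is the real inner product on Hermitian matrices with respect to which $\nabla_\rho$ and $\nabla^2_\rho$ are taken. A polynomial in $\rho$ means a real-coefficient polynomial jointly in the entries of $\operatorname{Re}\rho$ and $\operatorname{Im}\rho$; matrix-valued maps are polynomial if all components are. *)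

theory Defs
  imports "HOL-Analysis.Analysis"
begin

type_synonym 'n cmat = "complex^'n^'n"

definition madj :: "('n::finite) cmat \<Rightarrow> 'n cmat" where
  "madj A = (\<chi> i j. cnj (A$j$i))"

definition hermitian :: "('n::finite) cmat \<Rightarrow> bool" where
  "hermitian A \<longleftrightarrow> madj A = A"

definition mtr :: "('n::finite) cmat \<Rightarrow> complex" where
  "mtr A = (\<Sum>i\<in>UNIV. A$i$i)"

definition cscale :: "complex \<Rightarrow> ('n::finite) cmat \<Rightarrow> 'n cmat" where
  "cscale c A = (\<chi> i j. c * A$i$j)"

definition mcomm :: "('n::finite) cmat \<Rightarrow> 'n cmat \<Rightarrow> 'n cmat" where
  "mcomm A C = A ** C - C ** A"

definition macomm :: "('n::finite) cmat \<Rightarrow> 'n cmat \<Rightarrow> 'n cmat" where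
  "macomm A C = A ** C + C ** A"

definition Ham :: "('n::finite) cmat \<Rightarrow> ('k::finite \<Rightarrow> 'n cmat) \<Rightarrow> real^'k \<Rightarrow> 'n cmat" where
  "Ham H0 Hk u = H0 + (\<Sum>k\<in>UNIV. (u$k) *\<^sub>R Hk k)"

definition Lind :: "('n::finite) cmat \<Rightarrow> ('k::finite \<Rightarrow> 'n cmat) \<Rightarrow> (nat \<Rightarrow> 'n cmat) \<Rightarrow> nat
    \<Rightarrow> real^'k \<Rightarrow> 'n cmat \<Rightarrow> 'n cmat" where
  "Lind H0 Hk \<sigma> L u \<rho> = cscale (- \<i>) (mcomm (Ham H0 Hk u) \<rho>)
     + (\<Sum>l\<in>{1..L}. \<sigma> l ** \<rho> ** madj (\<sigma> l) - (1/2) *\<^sub>R macomm (madj (\<sigma> l) ** \<sigma> l) \<rho>)"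

definition Gdiff :: "('n::finite) cmat \<Rightarrow> 'n cmat \<Rightarrow> 'n cmat" where
  "Gdiff s \<rho> = s ** \<rho> + \<rho> ** madj s - cscale (mtr (s ** \<rho> + \<rho> ** madj s)) \<rho>"

definition jrate :: "('n::finite) cmat \<Rightarrow> 'n cmat \<Rightarrow> complex" where
  "jrate s \<rho> = mtr (s ** \<rho> ** madj s)"

text \<open>h_l(rho) = sigma rho sigma^* / lambda_l(rho)  (Isabelle convention x/0 = 0)\<close>
definition hjump :: "('n::finite) cmat \<Rightarrow> 'n cmat \<Rightarrow> 'n cmat" where
  "hjump s \<rho> = cscale (inverse (jrate s \<rho>)) (s ** \<rho> ** madj s)"

definition Ljump :: "('n::finite) cmat \<Rightarrow> 'n cmat \<Rightarrow> 'n cmat" where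
  "Ljump s \<rho> = s ** \<rho> ** madj s - cscale (jrate s \<rho>) \<rho>"

definition Ltil :: "('n::finite) cmat \<Rightarrow> ('k::finite \<Rightarrow> 'n cmat) \<Rightarrow> (nat \<Rightarrow> 'n cmat) \<Rightarrow> nat
    \<Rightarrow> nat set \<Rightarrow> real^'k \<Rightarrow> 'n cmat \<Rightarrow> 'n cmat" where
  "Ltil H0 Hk \<sigma> L PC u \<rho> = Lind H0 Hk \<sigma> L u \<rho> - (\<Sum>l\<in>PC. Ljump (\<sigma> l) \<rho>)"

text \<open>Infinitesimal generator. For a Hermitian direction X, the terms
  <X, grad w> and <X, Hess w X> are the first and second directional derivatives
  of s |-> w(t, rho + s X) at s = 0.\<close>
definition gen :: "('n::finite) cmat \<Rightarrow> ('k::finite \<Rightarrow> 'n cmat) \<Rightarrow> (nat \<Rightarrow> 'n cmat) \<Rightarrow> nat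
    \<Rightarrow> nat set \<Rightarrow> nat set \<Rightarrow> (real \<times> 'n cmat \<Rightarrow> real) \<Rightarrow> real \<Rightarrow> 'n cmat \<Rightarrow> real^'k \<Rightarrow> real" where
  "gen H0 Hk \<sigma> L HD PC w t \<rho> u =
      deriv (\<lambda>s. w (s, \<rho>)) t
    + deriv (\<lambda>s. w (t, \<rho> + s *\<^sub>R Ltil H0 Hk \<sigma> L PC u \<rho>)) 0
    + (1/2) * (\<Sum>l\<in>HD. deriv (deriv (\<lambda>s. w (t, \<rho> + s *\<^sub>R Gdiff (\<sigma> l) \<rho>))) 0)
    + (\<Sum>l\<in>PC. Re (jrate (\<sigma> l) \<rho>) * (w (t, hjump (\<sigma> l) \<rho>) - w (t, \<rho>)))"

inductive poly_in :: "('a \<Rightarrow> real) set \<Rightarrow> ('a \<Rightarrow> real) \<Rightarrow> bool" for V where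
  const: "poly_in V (\<lambda>x. c)"
| var: "v \<in> V \<Longrightarrow> poly_in V v"
| add: "poly_in V f \<Longrightarrow> poly_in V g \<Longrightarrow> poly_in V (\<lambda>x. f x + g x)"
| mult: "poly_in V f \<Longrightarrow> poly_in V g \<Longrightarrow> poly_in V (\<lambda>x. f x * g x)"

definition vars_t_rho :: "(real \<times> ('n::finite) cmat \<Rightarrow> real) set" where
  "vars_t_rho = {f. f = fst \<or> (\<exists>i j. f = (\<lambda>p. Re (snd p $ i $ j)) \<or> f = (\<lambda>p. Im (snd p $ i $ j)))}"

definition vars_t_rho_u :: "(real \<times> (('n::finite) cmat) \<times> (real^('k::finite)) \<Rightarrow> real) set" where
  "vars_t_rho_u = {f. f = (\<lambda>(t,\<rho>,u). t)
     \<or> (\<exists>i j. f = (\<lambda>(t,\<rho>,u). Re (\<rho> $ i $ j)) \<or> f = (\<lambda>(t,\<rho>,u). Im (\<rho> $ i $ j)))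
     \<or> (\<exists>k. f = (\<lambda>(t,\<rho>,u). u $ k))}"

definition affine_poly :: "(('n::finite) cmat \<Rightarrow> real) \<Rightarrow> bool" where
  "affine_poly f \<longleftrightarrow> (\<exists>c a b. \<forall>\<rho>. f \<rho> = c + (\<Sum>i\<in>UNIV. \<Sum>j\<in>UNIV. a i j * Re (\<rho>$i$j) + b i j * Im (\<rho>$i$j)))"

definition affine_mat_poly :: "(('n::finite) cmat \<Rightarrow> 'n cmat) \<Rightarrow> bool" where
  "affine_mat_poly F \<longleftrightarrow> (\<forall>i j. affine_poly (\<lambda>\<rho>. Re (F \<rho> $ i $ j)) \<and> affine_poly (\<lambda>\<rho>. Im (F \<rho> $ i $ j)))"

end

theory Submission
  imports Defs
begin

(* The drift and diffusion directions
   L~(u) rho and G_l rho are polynomial matrices in (rho, u); a derivative of w along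
   the line s |-> rho + s X is a derivative of a polynomial in one adjoined variable s,
   hence again a polynomial, evaluated at s = 0. In the jump term
   Re lambda_l(rho) (w(t, h_l rho) - w(t, rho)) the map h_l may be replaced by its affine
   representative F, since the two can only differ where lambda_l(rho) = 0. *)

lemma poly_in_compose:
  assumes "poly_in V f" and "\<And>v. v \<in> V \<Longrightarrow> poly_in W (\<lambda>x. v (g x))"
  shows "poly_in W (\<lambda>x. f (g x))"
  using assms(1) by induction (auto intro: poly_in.intros assms(2))

lemma poly_in_uminus: "poly_in V f \<Longrightarrow> poly_in V (\<lambda>x. - f x)"
  using poly_in.mult[OF poly_in.const[of V "-1"]] by simp

lemma poly_in_diff: "poly_in V f \<Longrightarrow> poly_in V g \<Longrightarrow> poly_in V (\<lambda>x. f x - g x)"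
  using poly_in.add[OF _ poly_in_uminus] by simp

lemma poly_in_sum:
  assumes "\<And>i. i \<in> A \<Longrightarrow> poly_in V (f i)"
  shows "poly_in V (\<lambda>x. \<Sum>i\<in>A. f i x)"
proof (cases "finite A")
  case True
  then show ?thesis
    using assms by (induction A rule: finite_induct) (auto intro: poly_in.intros)
qed (simp add: poly_in.const)

definition complex_poly_in :: "('a \<Rightarrow> real) set \<Rightarrow> ('a \<Rightarrow> complex) \<Rightarrow> bool" where
  "complex_poly_in V f \<longleftrightarrow> poly_in V (\<lambda>x. Re (f x)) \<and> poly_in V (\<lambda>x. Im (f x))"

lemma complex_poly_in_const: "complex_poly_in V (\<lambda>x. c)"
  by (simp add: complex_poly_in_def poly_in.const)

lemma complex_poly_in_add:
  "complex_poly_in V f \<Longrightarrow> complex_poly_in V g \<Longrightarrow> complex_poly_in V (\<lambda>x. f x + g x)"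
  by (simp add: complex_poly_in_def poly_in.add)

lemma complex_poly_in_diff:
  "complex_poly_in V f \<Longrightarrow> complex_poly_in V g \<Longrightarrow> complex_poly_in V (\<lambda>x. f x - g x)"
  by (simp add: complex_poly_in_def poly_in_diff)

lemma complex_poly_in_mult:
  "complex_poly_in V f \<Longrightarrow> complex_poly_in V g \<Longrightarrow> complex_poly_in V (\<lambda>x. f x * g x)"
  by (simp add: complex_poly_in_def poly_in_diff poly_in.add poly_in.mult)

lemma complex_poly_in_cnj: "complex_poly_in V f \<Longrightarrow> complex_poly_in V (\<lambda>x. cnj (f x))"
  by (simp add: complex_poly_in_def poly_in_uminus)

lemma complex_poly_in_sum:
  "(\<And>i. i \<in> A \<Longrightarrow> complex_poly_in V (f i)) \<Longrightarrow> complex_poly_in V (\<lambda>x. \<Sum>i\<in>A. f i x)"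
  unfolding complex_poly_in_def by (auto simp: Re_sum Im_sum intro!: poly_in_sum)

definition cmat_poly_in :: "('a \<Rightarrow> real) set \<Rightarrow> ('a \<Rightarrow> ('n::finite) cmat) \<Rightarrow> bool" where
  "cmat_poly_in V M \<longleftrightarrow> (\<forall>i j. complex_poly_in V (\<lambda>x. M x $ i $ j))"

lemma cmat_poly_in_const: "cmat_poly_in V (\<lambda>x. A)"
  by (simp add: cmat_poly_in_def complex_poly_in_const)

lemma cmat_poly_in_add:
  "cmat_poly_in V A \<Longrightarrow> cmat_poly_in V B \<Longrightarrow> cmat_poly_in V (\<lambda>x. A x + B x)"
  by (simp add: cmat_poly_in_def complex_poly_in_add)

lemma cmat_poly_in_diff:
  "cmat_poly_in V A \<Longrightarrow> cmat_poly_in V B \<Longrightarrow> cmat_poly_in V (\<lambda>x. A x - B x)"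
  by (simp add: cmat_poly_in_def complex_poly_in_diff)

lemma cmat_poly_in_mult:
  "cmat_poly_in V A \<Longrightarrow> cmat_poly_in V B \<Longrightarrow> cmat_poly_in V (\<lambda>x. A x ** B x)"
  unfolding cmat_poly_in_def matrix_matrix_mult_def
  by (auto intro!: complex_poly_in_sum complex_poly_in_mult)

lemma cmat_poly_in_madj: "cmat_poly_in V A \<Longrightarrow> cmat_poly_in V (\<lambda>x. madj (A x))"
  unfolding cmat_poly_in_def madj_def by (auto intro!: complex_poly_in_cnj)

lemma cmat_poly_in_cscale:
  "complex_poly_in V c \<Longrightarrow> cmat_poly_in V A \<Longrightarrow> cmat_poly_in V (\<lambda>x. cscale (c x) (A x))"
  unfolding cmat_poly_in_def cscale_def by (auto intro!: complex_poly_in_mult)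

lemma cmat_poly_in_scaleR:
  "poly_in V r \<Longrightarrow> cmat_poly_in V A \<Longrightarrow> cmat_poly_in V (\<lambda>x. r x *\<^sub>R A x)"
  unfolding cmat_poly_in_def complex_poly_in_def by (auto intro!: poly_in.mult)

lemma cmat_poly_in_sum:
  "(\<And>i. i \<in> A \<Longrightarrow> cmat_poly_in V (f i)) \<Longrightarrow> cmat_poly_in V (\<lambda>x. \<Sum>i\<in>A. f i x)"
  unfolding cmat_poly_in_def by (auto simp: sum_component intro!: complex_poly_in_sum)

lemma complex_poly_in_mtr: "cmat_poly_in V A \<Longrightarrow> complex_poly_in V (\<lambda>x. mtr (A x))"
  unfolding cmat_poly_in_def mtr_def by (auto intro!: complex_poly_in_sum)

lemmas cmat_poly_in_intros =
  cmat_poly_in_const cmat_poly_in_add cmat_poly_in_diff cmat_poly_in_mult cmat_poly_in_madj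
  cmat_poly_in_cscale cmat_poly_in_scaleR cmat_poly_in_sum complex_poly_in_mtr complex_poly_in_const

lemma complex_poly_in_jrate:
  "cmat_poly_in V R \<Longrightarrow> complex_poly_in V (\<lambda>x. jrate s (R x))"
  unfolding jrate_def by (intro cmat_poly_in_intros)

lemma cmat_poly_in_Gdiff: "cmat_poly_in V R \<Longrightarrow> cmat_poly_in V (\<lambda>x. Gdiff s (R x))"
  unfolding Gdiff_def by (intro cmat_poly_in_intros)

lemma cmat_poly_in_Ltil:
  assumes "cmat_poly_in V R" and "\<And>k. poly_in V (\<lambda>x. U x $ k)"
  shows "cmat_poly_in V (\<lambda>x. Ltil H0 Hk \<sigma> L PC (U x) (R x))"
  unfolding Ltil_def Lind_def Ljump_def Ham_def mcomm_def macomm_def jrate_def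
  by (intro cmat_poly_in_intros assms poly_in.const)

lemma poly_in_vars_t_rho_compose:
  assumes "poly_in vars_t_rho w" and "poly_in V T" and "cmat_poly_in V R"
  shows "poly_in V (\<lambda>x. w (T x, R x))"
  using assms(2,3)
  by (intro poly_in_compose[OF assms(1), of V "\<lambda>x. (T x, R x)", simplified])
    (auto simp: vars_t_rho_def cmat_poly_in_def complex_poly_in_def)

lemma poly_in_affine_poly:
  assumes "affine_poly f" and "cmat_poly_in V R"
  shows "poly_in V (\<lambda>x. f (R x))"
proof -
  obtain c a b where "\<And>\<rho>. f \<rho> = c + (\<Sum>i\<in>UNIV. \<Sum>j\<in>UNIV. a i j * Re (\<rho>$i$j) + b i j * Im (\<rho>$i$j))"
    using assms(1) unfolding affine_poly_def by blast
  then show ?thesis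
    using assms(2) unfolding cmat_poly_in_def complex_poly_in_def
    by (auto intro!: poly_in.add poly_in.mult poly_in.const poly_in_sum)
qed

lemma cmat_poly_in_affine_mat_poly:
  assumes "affine_mat_poly F" and "cmat_poly_in V R"
  shows "cmat_poly_in V (\<lambda>x. F (R x))"
proof -
  have "poly_in V (\<lambda>x. Re (F (R x) $ i $ j))" and "poly_in V (\<lambda>x. Im (F (R x) $ i $ j))" for i j
    using poly_in_affine_poly[of "\<lambda>\<rho>. Re (F \<rho> $ i $ j)" V R]
      poly_in_affine_poly[of "\<lambda>\<rho>. Im (F \<rho> $ i $ j)" V R] assms
    by (simp_all add: affine_mat_poly_def)
  then show ?thesis by (simp add: cmat_poly_in_def complex_poly_in_def)
qed

definition adjoin_var :: "('a \<Rightarrow> real) set \<Rightarrow> ('a \<times> real \<Rightarrow> real) set" where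
  "adjoin_var V = {\<lambda>p. v (fst p) | v. v \<in> V} \<union> {snd}"

lemma poly_in_adjoin_var_fst: "poly_in V f \<Longrightarrow> poly_in (adjoin_var V) (\<lambda>p. f (fst p))"
  by (erule poly_in_compose) (auto simp: adjoin_var_def intro: poly_in.var)

lemma poly_in_adjoin_var_snd: "poly_in (adjoin_var V) snd"
  by (rule poly_in.var) (simp add: adjoin_var_def)

lemma cmat_poly_in_adjoin_var_fst:
  "cmat_poly_in V M \<Longrightarrow> cmat_poly_in (adjoin_var V) (\<lambda>p. M (fst p))"
  unfolding cmat_poly_in_def complex_poly_in_def by (auto intro: poly_in_adjoin_var_fst)

lemma poly_in_adjoin_var_eval:
  assumes "poly_in (adjoin_var V) g" and "poly_in V e"
  shows "poly_in V (\<lambda>x. g (x, e x))"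
  using assms(2)
  by (intro poly_in_compose[OF assms(1), of V "\<lambda>x. (x, e x)", simplified])
    (auto simp: adjoin_var_def intro: poly_in.var)

lemma poly_in_adjoin_var_has_derivative:
  assumes "poly_in (adjoin_var V) g"
  shows "\<exists>g'. poly_in (adjoin_var V) g' \<and>
    (\<forall>x s. ((\<lambda>s. g (x, s)) has_real_derivative g' (x, s)) (at s))"
  using assms
proof induction
  case (const c)
  show ?case by (intro exI[of _ "\<lambda>_. 0"]) (auto intro: poly_in.const)
next
  case (var v)
  then consider u where "v = (\<lambda>p. u (fst p))" | "v = snd"
    by (auto simp: adjoin_var_def)
  then show ?case
  proof cases
    case 1
    then show ?thesis by (intro exI[of _ "\<lambda>_. 0"]) (auto intro: poly_in.const)
  next
    case 2
    then show ?thesis by (intro exI[of _ "\<lambda>_. 1"]) (auto intro: poly_in.const)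
  qed
next
  case (add f g)
  then obtain f' g' where "poly_in (adjoin_var V) f'" "poly_in (adjoin_var V) g'"
    "\<forall>x s. ((\<lambda>s. f (x, s)) has_real_derivative f' (x, s)) (at s)"
    "\<forall>x s. ((\<lambda>s. g (x, s)) has_real_derivative g' (x, s)) (at s)"
    by blast
  then show ?case
    by (intro exI[of _ "\<lambda>p. f' p + g' p"]) (auto intro: poly_in.add derivative_intros)
next
  case (mult f g)
  then obtain f' g' where "poly_in (adjoin_var V) f'" "poly_in (adjoin_var V) g'"
    "\<forall>x s. ((\<lambda>s. f (x, s)) has_real_derivative f' (x, s)) (at s)"
    "\<forall>x s. ((\<lambda>s. g (x, s)) has_real_derivative g' (x, s)) (at s)"
    by blast
  with mult.hyps show ?case
    by (intro exI[of _ "\<lambda>p. f' p * g p + g' p * f p"])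
      (auto intro!: poly_in.add poly_in.mult DERIV_mult)
qed

lemma poly_in_adjoin_var_deriv:
  assumes "poly_in (adjoin_var V) g"
  shows "poly_in (adjoin_var V) (\<lambda>p. deriv (\<lambda>s. g (fst p, s)) (snd p))"
proof -
  obtain g' where "poly_in (adjoin_var V) g'"
    and "\<And>x s. ((\<lambda>s. g (x, s)) has_real_derivative g' (x, s)) (at s)"
    using poly_in_adjoin_var_has_derivative[OF assms] by blast
  moreover from this(2) have "(\<lambda>p. deriv (\<lambda>s. g (fst p, s)) (snd p)) = g'"
    by (intro ext) (metis prod.collapse DERIV_imp_deriv)
  ultimately show ?thesis by simp
qed

lemma poly_in_time_deriv:
  assumes "poly_in vars_t_rho w" and "poly_in V T" and "cmat_poly_in V R"
  shows "poly_in V (\<lambda>x. deriv (\<lambda>s. w (s, R x)) (T x))"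
proof -
  have "poly_in (adjoin_var V) (\<lambda>p. w (snd p, R (fst p)))"
    by (intro poly_in_vars_t_rho_compose[OF assms(1)] poly_in_adjoin_var_snd
        cmat_poly_in_adjoin_var_fst assms(3))
  from poly_in_adjoin_var_eval[OF poly_in_adjoin_var_deriv[OF this] assms(2)]
  show ?thesis by simp
qed

lemma poly_in_line_deriv:
  assumes "poly_in vars_t_rho w" and "poly_in V T" and "cmat_poly_in V R" and "cmat_poly_in V X"
  shows "poly_in V (\<lambda>x. deriv (\<lambda>s. w (T x, R x + s *\<^sub>R X x)) 0)"
    and "poly_in V (\<lambda>x. deriv (deriv (\<lambda>s. w (T x, R x + s *\<^sub>R X x))) 0)"
proof -
  have "poly_in (adjoin_var V) (\<lambda>p. w (T (fst p), R (fst p) + snd p *\<^sub>R X (fst p)))"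
    by (intro poly_in_vars_t_rho_compose[OF assms(1)] poly_in_adjoin_var_fst
        cmat_poly_in_add cmat_poly_in_scaleR cmat_poly_in_adjoin_var_fst
        poly_in_adjoin_var_snd assms(2-4))
  then have D1: "poly_in (adjoin_var V)
      (\<lambda>p. deriv (\<lambda>s. w (T (fst p), R (fst p) + s *\<^sub>R X (fst p))) (snd p))"
    using poly_in_adjoin_var_deriv by fastforce
  from poly_in_adjoin_var_eval[OF D1 poly_in.const]
  show "poly_in V (\<lambda>x. deriv (\<lambda>s. w (T x, R x + s *\<^sub>R X x)) 0)" by simp
  from poly_in_adjoin_var_eval[OF poly_in_adjoin_var_deriv[OF D1] poly_in.const]
  show "poly_in V (\<lambda>x. deriv (deriv (\<lambda>s. w (T x, R x + s *\<^sub>R X x))) 0)" by simp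
qed

lemma poly_in_jump_term:
  assumes "poly_in vars_t_rho w" and "affine_mat_poly F" and "poly_in V T" and "cmat_poly_in V R"
  shows "poly_in V (\<lambda>x. Re (jrate s (R x)) * (w (T x, F (R x)) - w (T x, R x)))"
  using complex_poly_in_jrate[OF assms(4)] cmat_poly_in_affine_mat_poly[OF assms(2,4)]
  by (auto simp: complex_poly_in_def
      intro!: poly_in.mult poly_in_diff poly_in_vars_t_rho_compose[OF assms(1,3)] assms(4))

lemma jump_term_eq:
  assumes "\<forall>\<rho>. hermitian \<rho> \<and> jrate s \<rho> \<noteq> 0 \<longrightarrow> hjump s \<rho> = F \<rho>" and "hermitian \<rho>"
  shows "Re (jrate s \<rho>) * (w (t, hjump s \<rho>) - w (t, \<rho>)) = Re (jrate s \<rho>) * (w (t, F \<rho>) - w (t, \<rho>))"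
  using assms by (cases "jrate s \<rho> = 0") auto

lemma poly_in_vars_t_rho_u_time:
  "poly_in (vars_t_rho_u :: (real \<times> ('n::finite) cmat \<times> (real^'k::finite) \<Rightarrow> real) set) fst"
  by (rule poly_in.var) (auto simp: vars_t_rho_u_def fun_eq_iff)

lemma poly_in_vars_t_rho_u_control:
  "poly_in (vars_t_rho_u :: (real \<times> ('n::finite) cmat \<times> (real^'k::finite) \<Rightarrow> real) set)
     (\<lambda>x. snd (snd x) $ k)"
  by (rule poly_in.var) (auto simp: vars_t_rho_u_def fun_eq_iff)

lemma cmat_poly_in_vars_t_rho_u_state:
  "cmat_poly_in (vars_t_rho_u :: (real \<times> ('n::finite) cmat \<times> (real^'k::finite) \<Rightarrow> real) set)
     (\<lambda>x. fst (snd x))"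
  unfolding cmat_poly_in_def complex_poly_in_def
  by (intro allI conjI poly_in.var) (auto simp: vars_t_rho_u_def fun_eq_iff)

theorem lemma3:
  fixes H0 :: "complex^'n::finite^'n" and Hk :: "'k::finite \<Rightarrow> complex^'n^'n"
    and \<sigma> :: "nat \<Rightarrow> complex^'n^'n" and L :: nat and HD PC :: "nat set"
    and w :: "real \<times> (complex^'n^'n) \<Rightarrow> real"
  assumes "hermitian H0" and "\<forall>k. hermitian (Hk k)"
    and "HD \<union> PC = {1..L}" and "HD \<inter> PC = {}"
    and "\<forall>l\<in>PC. \<exists>F. affine_mat_poly F \<and>
           (\<forall>\<rho>. hermitian \<rho> \<and> jrate (\<sigma> l) \<rho> \<noteq> 0 \<longrightarrow> hjump (\<sigma> l) \<rho> = F \<rho>)"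
    and "poly_in vars_t_rho w"
  shows "\<exists>P. poly_in (vars_t_rho_u :: (real \<times> (complex^'n^'n) \<times> (real^'k) \<Rightarrow> real) set) P \<and>
           (\<forall>t \<rho> u. hermitian \<rho> \<longrightarrow> gen H0 Hk \<sigma> L HD PC w t \<rho> u = P (t, \<rho>, u))"
proof -
  obtain F where F: "\<forall>l\<in>PC. affine_mat_poly (F l) \<and>
      (\<forall>\<rho>. hermitian \<rho> \<and> jrate (\<sigma> l) \<rho> \<noteq> 0 \<longrightarrow> hjump (\<sigma> l) \<rho> = F l \<rho>)"
    using bchoice[OF assms(5)] by blast
  note t = poly_in_vars_t_rho_u_time and \<rho> = cmat_poly_in_vars_t_rho_u_state
    and u = poly_in_vars_t_rho_u_control
  define P where "P x = deriv (\<lambda>s. w (s, fst (snd x))) (fst x)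
      + deriv (\<lambda>s. w (fst x, fst (snd x) + s *\<^sub>R Ltil H0 Hk \<sigma> L PC (snd (snd x)) (fst (snd x)))) 0
      + 1/2 * (\<Sum>l\<in>HD. deriv (deriv (\<lambda>s. w (fst x, fst (snd x) + s *\<^sub>R Gdiff (\<sigma> l) (fst (snd x))))) 0)
      + (\<Sum>l\<in>PC. Re (jrate (\<sigma> l) (fst (snd x))) * (w (fst x, F l (fst (snd x))) - w (fst x, fst (snd x))))"
    for x :: "real \<times> (complex^'n^'n) \<times> (real^'k)"
  have "gen H0 Hk \<sigma> L HD PC w t \<rho> u = P (t, \<rho>, u)" if "hermitian \<rho>" for t \<rho> u
  proof -
    have "(\<Sum>l\<in>PC. Re (jrate (\<sigma> l) \<rho>) * (w (t, hjump (\<sigma> l) \<rho>) - w (t, \<rho>)))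
        = (\<Sum>l\<in>PC. Re (jrate (\<sigma> l) \<rho>) * (w (t, F l \<rho>) - w (t, \<rho>)))"
      by (intro sum.cong refl jump_term_eq[OF _ that]) (use F in blast)
    then show ?thesis by (simp add: gen_def P_def)
  qed
  moreover have "poly_in vars_t_rho_u P"
    using F unfolding P_def
    by (intro poly_in.add poly_in.mult poly_in.const poly_in_sum
        poly_in_time_deriv[OF assms(6) t \<rho>]
        poly_in_line_deriv[OF assms(6) t \<rho> cmat_poly_in_Ltil[OF \<rho> u]]
        poly_in_line_deriv(2)[OF assms(6) t \<rho> cmat_poly_in_Gdiff[OF \<rho>]]
        poly_in_jump_term[OF assms(6) _ t \<rho>]) auto
  ultimately show ?thesis by blast
qed

end
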